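(* Let $A\in\Bbbk^{\theta\times\theta}$ be such that $\mathfrak{g}(A)$ is finite dimensional. Then $(\operatorname{ad}e_i)^p=(\operatorname{ad}f_i)^p=0$ on $\mathfrak{g}(A)$ for all $i\in\{1,\dots,\theta\}$.
   Context: $\Bbbk$ algebraically closed of characteristic $p>0$; $A=(a_{jk})$ with $a_{jj}\in\{0,2\}$ and $a_{jk}=0$ iff $a_{kj}=0$ for $j\ne k$. $\mathfrak{g}(A)$ is the contragredient Lie algebra: fix $\mathfrak{h}$ of dimension $2\theta-\operatorname{rank}A$, linearly independent $\xi_1,\dots,\xi_\theta\in\mathfrak{h}^*$, $h_1,\dots,h_\theta\in\mathfrak{h}$ with $\xi_k(h_j)=a_{jk}$; $\mathfrak{g}(A)$ is the Lie algebra generated by $\mathfrak{h}$ and $e_j,f_j$ ($1\le j\le\theta$) with relations $[h,h']=0$, $[h,e_j]=\xi_j(h)e_j$, $[h,f_j]=-\xi_j(h)f_j$, $[e_j,f_k]=\delta_{jk}h_j$, divided by the largest ideal which is graded (for $\deg e_j=1$, $\deg f_j=-1$, $\deg\mathfrak{h}=0$) and meets $\mathfrak{h}$ trivially. *)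

theory Defs
  imports "HOL-Analysis.Finite_Cartesian_Product" "HOL-Computational_Algebra.Polynomial"
begin

definition alg_closed_field :: "'k::field itself \<Rightarrow> bool" where
  "alg_closed_field _ \<longleftrightarrow> (\<forall>q :: 'k poly. degree q > 0 \<longrightarrow> (\<exists>x. poly q x = 0))"

definition mat_rank :: "('n::finite \<Rightarrow> 'n \<Rightarrow> 'k::field) \<Rightarrow> nat" where
  "mat_rank A = vector_space.dim (\<lambda>(c::'k) (v::'k^'n). \<chi> i. c * v $ i)
                  {(\<chi> j. A j k) | k. True}"

definition lie_algebra :: "('k::field \<Rightarrow> 'L::ab_group_add \<Rightarrow> 'L) \<Rightarrow> ('L \<Rightarrow> 'L \<Rightarrow> 'L) \<Rightarrow> bool" where
  "lie_algebra sc br \<longleftrightarrow> vector_space sc \<and>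
     (\<forall>x y z. br (x + y) z = br x z + br y z \<and> br x (y + z) = br x y + br x z) \<and>
     (\<forall>a x y. br (sc a x) y = sc a (br x y) \<and> br x (sc a y) = sc a (br x y)) \<and>
     (\<forall>x. br x x = 0) \<and>
     (\<forall>x y z. br x (br y z) + br y (br z x) + br z (br x y) = 0)"

definition lie_subalgebra :: "('k::field \<Rightarrow> 'L::ab_group_add \<Rightarrow> 'L) \<Rightarrow> ('L \<Rightarrow> 'L \<Rightarrow> 'L) \<Rightarrow> 'L set \<Rightarrow> bool" where
  "lie_subalgebra sc br S \<longleftrightarrow> module.subspace sc S \<and> (\<forall>x\<in>S. \<forall>y\<in>S. br x y \<in> S)"

definition lie_generated :: "('k::field \<Rightarrow> 'L::ab_group_add \<Rightarrow> 'L) \<Rightarrow> ('L \<Rightarrow> 'L \<Rightarrow> 'L) \<Rightarrow> 'L set \<Rightarrow> 'L set" where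
  "lie_generated sc br X = \<Inter>{S. lie_subalgebra sc br S \<and> X \<subseteq> S}"

definition lie_ideal :: "('k::field \<Rightarrow> 'L::ab_group_add \<Rightarrow> 'L) \<Rightarrow> ('L \<Rightarrow> 'L \<Rightarrow> 'L) \<Rightarrow> 'L set \<Rightarrow> bool" where
  "lie_ideal sc br I \<longleftrightarrow> module.subspace sc I \<and> (\<forall>x y. y \<in> I \<longrightarrow> br x y \<in> I)"

definition homog_decomp :: "(int \<Rightarrow> 'L set) \<Rightarrow> 'L::ab_group_add \<Rightarrow> (int \<Rightarrow> 'L) \<Rightarrow> bool" where
  "homog_decomp G x c \<longleftrightarrow> finite {n. c n \<noteq> 0} \<and> (\<forall>n. c n \<in> G n) \<and> x = sum c {n. c n \<noteq> 0}"

definition Z_grading :: "('k::field \<Rightarrow> 'L::ab_group_add \<Rightarrow> 'L) \<Rightarrow> ('L \<Rightarrow> 'L \<Rightarrow> 'L) \<Rightarrow> (int \<Rightarrow> 'L set) \<Rightarrow> bool" where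
  "Z_grading sc br G \<longleftrightarrow> (\<forall>n. module.subspace sc (G n)) \<and>
     (\<forall>x. \<exists>!c. homog_decomp G x c) \<and>
     (\<forall>m n x y. x \<in> G m \<longrightarrow> y \<in> G n \<longrightarrow> br x y \<in> G (m + n))"

definition graded_ideal :: "('k::field \<Rightarrow> 'L::ab_group_add \<Rightarrow> 'L) \<Rightarrow> ('L \<Rightarrow> 'L \<Rightarrow> 'L) \<Rightarrow> (int \<Rightarrow> 'L set) \<Rightarrow> 'L set \<Rightarrow> bool" where
  "graded_ideal sc br G I \<longleftrightarrow> lie_ideal sc br I \<and>
     (\<forall>x\<in>I. \<forall>c. homog_decomp G x c \<longrightarrow> (\<forall>n. c n \<in> I))"

text \<open>(L, sc, br) together with H (the Cartan subalgebra h, a subspace of L), hh (the h_j),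
  xi (the xi_k, linear functionals on H), e, f is (isomorphic to) the contragredient Lie algebra g(A):
  it satisfies the defining relations, is generated by H and the e_j, f_j, is graded with
  deg e_j = 1, deg f_j = -1, deg H = 0, and has no nonzero graded ideal meeting H trivially
  (i.e. the largest such ideal has been divided out).\<close>
definition contragredient ::
  "('k::field \<Rightarrow> 'L::ab_group_add \<Rightarrow> 'L) \<Rightarrow> ('L \<Rightarrow> 'L \<Rightarrow> 'L) \<Rightarrow> ('n::finite \<Rightarrow> 'n \<Rightarrow> 'k) \<Rightarrow>
   'L set \<Rightarrow> ('n \<Rightarrow> 'L) \<Rightarrow> ('n \<Rightarrow> 'L \<Rightarrow> 'k) \<Rightarrow> ('n \<Rightarrow> 'L) \<Rightarrow> ('n \<Rightarrow> 'L) \<Rightarrow> bool" where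
  "contragredient sc br A H hh xi e f \<longleftrightarrow>
     lie_algebra sc br \<and>
     module.subspace sc H \<and>
     vector_space.dim sc H = 2 * CARD('n) - mat_rank A \<and>
     (\<forall>k. \<forall>x\<in>H. \<forall>y\<in>H. xi k (x + y) = xi k x + xi k y) \<and>
     (\<forall>k a. \<forall>x\<in>H. xi k (sc a x) = a * xi k x) \<and>
     (\<forall>c. (\<forall>x\<in>H. (\<Sum>k\<in>UNIV. c k * xi k x) = 0) \<longrightarrow> (\<forall>k. c k = 0)) \<and>
     (\<forall>j. hh j \<in> H) \<and>
     (\<forall>j k. xi k (hh j) = A j k) \<and>
     (\<forall>x\<in>H. \<forall>y\<in>H. br x y = 0) \<and>
     (\<forall>x\<in>H. \<forall>j. br x (e j) = sc (xi j x) (e j)) \<and>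
     (\<forall>x\<in>H. \<forall>j. br x (f j) = - sc (xi j x) (f j)) \<and>
     (\<forall>j k. br (e j) (f k) = (if j = k then hh j else 0)) \<and>
     lie_generated sc br (H \<union> range e \<union> range f) = UNIV \<and>
     (\<exists>G. Z_grading sc br G \<and> H \<subseteq> G 0 \<and> (\<forall>j. e j \<in> G 1 \<and> f j \<in> G (-1)) \<and>
          (\<forall>I. graded_ideal sc br G I \<and> I \<inter> H = {0} \<longrightarrow> I = {0}))"

end

theory Submission
  imports Defs "HOL-Computational_Algebra.Primes"
begin

text \<open>In characteristic p the Leibniz rule makes (ad e_i)^p a derivation, because p divides
  (p choose k) for 0 < k < p; so it suffices that it kills the generators. This is immediate for
  h, the f_k and e_i. For j \<noteq> i the element y = (ad e_i)^p e_j is killed by every ad f_k: for k = i,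
  [f_i, y] = -((p choose 2) a_ii + p a_ij) (ad e_i)^(p-1) e_j, which vanishes (for p = 2 because
  a_ii \<in> {0, 2} forces a_ii = 0). In g(A) a homogeneous element of nonzero degree killed by all
  ad f_k is zero, as together with its images under ad h and the ad e_j it spans a graded ideal
  meeting h trivially. The statement for f_i follows by the Chevalley involution.\<close>

locale lie_alg =
  fixes sc :: "'k::field \<Rightarrow> 'L::ab_group_add \<Rightarrow> 'L" and br :: "'L \<Rightarrow> 'L \<Rightarrow> 'L"
  assumes lie_algebra: "lie_algebra sc br"
begin

sublocale vector_space sc
  using lie_algebra unfolding lie_algebra_def by blast

lemma bracket_add_left: "br (x + y) z = br x z + br y z"
  and bracket_add_right: "br x (y + z) = br x y + br x z"
  and bracket_scale_left: "br (sc a x) y = sc a (br x y)"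
  and bracket_scale_right: "br x (sc a y) = sc a (br x y)"
  and bracket_self [simp]: "br x x = 0"
  and bracket_jacobi: "br x (br y z) + br y (br z x) + br z (br x y) = 0"
  using lie_algebra unfolding lie_algebra_def by blast+

lemma bracket_zero_left [simp]: "br 0 x = 0"
  using bracket_add_left[of 0 0 x] by simp

lemma bracket_zero_right [simp]: "br x 0 = 0"
  using bracket_add_right[of x 0 0] by simp

lemma bracket_minus_left: "br (- x) y = - br x y"
  using bracket_add_left[of x "- x" y] by (simp add: eq_neg_iff_add_eq_0 add.commute)

lemma bracket_minus_right: "br x (- y) = - br x y"
  using bracket_add_right[of x y "- y"] by (simp add: eq_neg_iff_add_eq_0 add.commute)

lemma bracket_antisym: "br x y = - br y x"
proof -
  have "0 = br (x + y) (x + y)" by simp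
  also have "\<dots> = (br x x + br y x) + (br x y + br y y)"
    by (simp only: bracket_add_left bracket_add_right)
  finally have "br y x + br x y = 0" by (simp add: add.commute)
  then show ?thesis by (simp add: eq_neg_iff_add_eq_0 add.commute)
qed

lemma bracket_sum_right: "br x (sum g S) = (\<Sum>i\<in>S. br x (g i))"
  by (induct S rule: infinite_finite_induct) (auto simp: bracket_add_right)

lemma bracket_derivation: "br a (br b c) = br (br a b) c + br b (br a c)"
proof -
  have 1: "br b (br c a) = - br b (br a c)" by (metis bracket_antisym bracket_minus_right)
  have 2: "br c (br a b) = - br (br a b) c" by (rule bracket_antisym)
  from bracket_jacobi[of a b c] show ?thesis
    unfolding 1 2 by (simp add: algebra_simps eq_neg_iff_add_eq_0)
qed

lemma ad_pow_add: "(br x ^^ n) (u + v) = (br x ^^ n) u + (br x ^^ n) v"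
  by (induct n) (auto simp: bracket_add_right)

lemma ad_pow_zero [simp]: "(br x ^^ n) 0 = 0"
  by (induct n) auto

lemma ad_pow_scale: "(br x ^^ n) (sc a u) = sc a ((br x ^^ n) u)"
  by (induct n) (auto simp: bracket_scale_right)

lemma ad_pow_Suc_right: "(br x ^^ Suc n) v = (br x ^^ n) (br x v)"
  by (simp only: funpow_Suc_right comp_apply)

lemma ad_pow_bracket:
  "(br x ^^ n) (br y z) =
     (\<Sum>k\<le>n. sc (of_nat (n choose k)) (br ((br x ^^ k) y) ((br x ^^ (n - k)) z)))"
proof (induct n)
  case 0
  show ?case by simp
next
  case (Suc n)
  define F where "F k l = br ((br x ^^ k) y) ((br x ^^ l) z)" for k l
  have ad_F: "br x (F k l) = F (Suc k) l + F k (Suc l)" for k l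
    unfolding F_def funpow.simps comp_apply by (rule bracket_derivation)
  have "(br x ^^ Suc n) (br y z) = br x (\<Sum>k\<le>n. sc (of_nat (n choose k)) (F k (n - k)))"
    using Suc unfolding F_def by simp
  also have "\<dots> = (\<Sum>k\<le>n. sc (of_nat (n choose k)) (F (Suc k) (n - k)))
       + (\<Sum>k\<le>n. sc (of_nat (n choose k)) (F k (Suc n - k)))"
    by (simp add: bracket_sum_right bracket_scale_right ad_F scale_right_distrib sum.distrib
        Suc_diff_le)
  also have "(\<Sum>k\<le>n. sc (of_nat (n choose k)) (F k (Suc n - k)))
      = (\<Sum>k\<le>Suc n. sc (of_nat (n choose k)) (F k (Suc n - k)))"
    by (simp add: binomial_eq_0)
  also have "\<dots> = F 0 (Suc n) + (\<Sum>k\<le>n. sc (of_nat (n choose Suc k)) (F (Suc k) (n - k)))"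
    by (simp add: sum.atMost_Suc_shift del: sum.atMost_Suc)
  also have "(\<Sum>k\<le>n. sc (of_nat (n choose k)) (F (Suc k) (n - k))) +
      (F 0 (Suc n) + (\<Sum>k\<le>n. sc (of_nat (n choose Suc k)) (F (Suc k) (n - k))))
    = (\<Sum>k\<le>Suc n. sc (of_nat (Suc n choose k)) (F k (Suc n - k)))"
    by (simp add: sum.atMost_Suc_shift scale_left_distrib sum.distrib add_ac
        del: sum.atMost_Suc)
  finally show ?case unfolding F_def .
qed

lemma ad_pow_prime_derivation:
  assumes "prime p" and "CHAR('k) = p"
  shows "(br x ^^ p) (br u v) = br ((br x ^^ p) u) v + br u ((br x ^^ p) v)"
proof -
  have choose_eq_0: "(of_nat (p choose k) :: 'k) = 0" if "0 < k" "k < p" for k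
    using that assms by (simp add: of_nat_eq_0_iff_char_dvd dvd_choose_prime)
  have "(br x ^^ p) (br u v) =
      (\<Sum>k\<in>{0, p}. sc (of_nat (p choose k)) (br ((br x ^^ k) u) ((br x ^^ (p - k)) v)))"
    unfolding ad_pow_bracket by (rule sum.mono_neutral_right) (auto simp: choose_eq_0)
  also have "\<dots> = br ((br x ^^ p) u) v + br u ((br x ^^ p) v)"
    using prime_gt_0_nat[OF assms(1)] by (simp add: add.commute)
  finally show ?thesis .
qed

lemma lie_generated_subset:
  "lie_subalgebra sc br S \<Longrightarrow> X \<subseteq> S \<Longrightarrow> lie_generated sc br X \<subseteq> S"
  unfolding lie_generated_def by blast

lemma derivation_eq_0_on_lie_generated:
  assumes "\<And>u v. D (u + v) = D u + D v" and "\<And>a u. D (sc a u) = sc a (D u)"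
    and "\<And>u v. D (br u v) = br (D u) v + br u (D v)"
    and "\<And>x. x \<in> X \<Longrightarrow> D x = 0"
    and "x \<in> lie_generated sc br X"
  shows "D x = 0"
proof -
  have "lie_subalgebra sc br {x. D x = 0}"
    unfolding lie_subalgebra_def subspace_def
  proof (intro conjI ballI allI)
    have "D 0 = D 0 + D 0" using assms(1)[of 0 0] by simp
    then show "0 \<in> {x. D x = 0}" by simp
  qed (simp_all add: assms(1-3))
  then show ?thesis
    using lie_generated_subset[of "{x. D x = 0}" X] assms(4,5) by blast
qed

lemma lie_idealI_generators:
  assumes "lie_generated sc br X = UNIV" and "subspace V"
    and "\<And>x v. x \<in> X \<Longrightarrow> v \<in> V \<Longrightarrow> br x v \<in> V"
  shows "lie_ideal sc br V"
proof -
  define N where "N = {x. \<forall>v\<in>V. br x v \<in> V}"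
  have "lie_subalgebra sc br N"
    unfolding lie_subalgebra_def subspace_def
  proof (intro conjI ballI allI)
    show "0 \<in> N" using subspace_0[OF assms(2)] by (simp add: N_def)
    show "x + y \<in> N" if "x \<in> N" "y \<in> N" for x y
      using that subspace_add[OF assms(2)] by (simp add: N_def bracket_add_left)
    show "sc c x \<in> N" if "x \<in> N" for c x
      using that subspace_scale[OF assms(2)] by (simp add: N_def bracket_scale_left)
    show "br x y \<in> N" if "x \<in> N" "y \<in> N" for x y
    proof -
      have "br (br x y) v = br x (br y v) - br y (br x v)" for v
        using bracket_derivation[of x y v] by (simp add: algebra_simps)
      then show ?thesis using that subspace_diff[OF assms(2)] by (simp add: N_def)
    qed
  qed
  moreover have "X \<subseteq> N" using assms(3) by (auto simp: N_def)
  ultimately have "N = UNIV" using lie_generated_subset assms(1) by blast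
  then show ?thesis using assms(2) by (auto simp: lie_ideal_def N_def)
qed

lemma bracket_span_closed:
  assumes "v \<in> span M" and "\<And>m. m \<in> M \<Longrightarrow> br x m \<in> span M"
  shows "br x v \<in> span M"
proof -
  have "subspace {v. br x v \<in> span M}"
    unfolding subspace_def
    by (auto simp: bracket_add_right bracket_scale_right span_add span_scale span_zero)
  then show ?thesis using span_subspace_induct[OF assms(1)] assms(2) by blast
qed

end

lemma homog_decomp_single:
  assumes "x \<in> G n" and "\<And>m. 0 \<in> G m"
  shows "homog_decomp G x (\<lambda>m. if m = n then x else 0)"
proof -
  have "{m. (if m = n then x else 0) \<noteq> 0} \<subseteq> {n}" by auto
  then show ?thesis
    using assms unfolding homog_decomp_def
    by (auto simp: finite_subset sum.mono_neutral_left[of "{n}"])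
qed

lemma (in module) span_homog_decomp:
  assumes "\<And>n. subspace (G n)" and "\<And>m. m \<in> M \<Longrightarrow> \<exists>n\<in>N. m \<in> G n" and "x \<in> span M"
  obtains c where "homog_decomp G x c" and "\<And>n. c n \<in> span M" and "{n. c n \<noteq> 0} \<subseteq> N"
proof -
  obtain S u where S: "finite S" "S \<subseteq> M" and x: "x = (\<Sum>v\<in>S. u v *s v)"
    using assms(3) unfolding span_explicit by blast
  obtain deg where deg: "\<And>m. m \<in> M \<Longrightarrow> deg m \<in> N \<and> m \<in> G (deg m)"
    using assms(2) bchoice[of M "\<lambda>m n. n \<in> N \<and> m \<in> G n"] by blast
  define c where "c n = (\<Sum>v\<in>{v \<in> S. deg v = n}. u v *s v)" for n
  have "c n = 0" if "n \<notin> deg ` S" for n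
    using that unfolding c_def by (intro sum.neutral) auto
  then have supp: "{n. c n \<noteq> 0} \<subseteq> deg ` S" by blast
  have "homog_decomp G x c"
    unfolding homog_decomp_def
  proof (intro conjI allI)
    show "finite {n. c n \<noteq> 0}" using supp S(1) finite_subset by blast
    show "c n \<in> G n" for n
      unfolding c_def using S(2) deg assms(1)
      by (intro subspace_sum) (auto intro: subspace_scale)
    have "sum c {n. c n \<noteq> 0} = sum c (deg ` S)"
      using supp S(1) by (intro sum.mono_neutral_left) simp_all
    also have "\<dots> = x"
      unfolding c_def x by (rule sum.group) (simp_all add: S(1))
    finally show "x = sum c {n. c n \<noteq> 0}" ..
  qed
  moreover have "c n \<in> span M" for n
    unfolding c_def using S(2) by (intro span_sum span_scale span_base) auto
  moreover have "{n. c n \<noteq> 0} \<subseteq> N" using supp S(2) deg by blast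
  ultimately show ?thesis using that by blast
qed

lemma graded_idealI:
  assumes "Z_grading sc br G" and "lie_ideal sc br I"
    and "\<And>x. x \<in> I \<Longrightarrow> \<exists>c. homog_decomp G x c \<and> (\<forall>n. c n \<in> I)"
  shows "graded_ideal sc br G I"
proof -
  have "c = c'" if "homog_decomp G x c" "homog_decomp G x c'" for x c c'
    using assms(1) that unfolding Z_grading_def by metis
  then show ?thesis
    unfolding graded_ideal_def using assms(2,3) by blast
qed

inductive_set ad_orbit :: "('L \<Rightarrow> 'L \<Rightarrow> 'L) \<Rightarrow> 'L set \<Rightarrow> 'L \<Rightarrow> 'L set"
  for br X y where
  ad_orbit_base: "y \<in> ad_orbit br X y"
| ad_orbit_step: "g \<in> X \<Longrightarrow> v \<in> ad_orbit br X y \<Longrightarrow> br g v \<in> ad_orbit br X y"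

text \<open>The degree d = \<plusminus>1 of the e_j is a parameter so that the Chevalley involution
  (e, f, h_j, \<xi>_k) \<mapsto> (f, e, -h_j, -\<xi>_k), which reverses the grading, maps one instance to another.\<close>
locale contragredient_alg = lie_alg sc br
  for sc :: "'k::field \<Rightarrow> 'L::ab_group_add \<Rightarrow> 'L" and br +
  fixes H :: "'L set" and hh :: "'n \<Rightarrow> 'L" and xi :: "'n \<Rightarrow> 'L \<Rightarrow> 'k"
    and e f :: "'n \<Rightarrow> 'L" and G :: "int \<Rightarrow> 'L set" and d :: int
  assumes H_subspace: "subspace H"
    and hh_in_H: "hh j \<in> H"
    and bracket_H_e: "x \<in> H \<Longrightarrow> br x (e j) = sc (xi j x) (e j)"
    and bracket_H_f: "x \<in> H \<Longrightarrow> br x (f j) = - sc (xi j x) (f j)"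
    and bracket_e_f: "br (e j) (f k) = (if j = k then hh j else 0)"
    and generated: "lie_generated sc br (H \<union> range e \<union> range f) = UNIV"
    and grading: "Z_grading sc br G"
    and H_deg_0: "H \<subseteq> G 0"
    and e_deg: "e j \<in> G d"
    and d_unit: "d * d = 1"
    and no_graded_ideal: "graded_ideal sc br G I \<Longrightarrow> I \<inter> H = {0} \<Longrightarrow> I = {0}"
begin

lemma G_subspace: "subspace (G n)"
  using grading unfolding Z_grading_def by blast

lemma G_bracket: "x \<in> G m \<Longrightarrow> y \<in> G n \<Longrightarrow> br x y \<in> G (m + n)"
  using grading unfolding Z_grading_def by blast

lemma homog_decomp_unique: "homog_decomp G x c \<Longrightarrow> homog_decomp G x c' \<Longrightarrow> c = c'"
  using grading unfolding Z_grading_def by metis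

lemma bracket_f_e: "br (f k) (e j) = (if j = k then - hh j else 0)"
  using bracket_e_f[of j k] bracket_antisym[of "f k" "e j"] by simp

lemma bracket_f_H: "x \<in> H \<Longrightarrow> br (f j) x = sc (xi j x) (f j)"
  using bracket_antisym[of "f j" x] bracket_H_f by simp

lemma bracket_e_H: "x \<in> H \<Longrightarrow> br (e j) x = - sc (xi j x) (e j)"
  using bracket_antisym[of "e j" x] bracket_H_e by simp

lemma ad_orbit_homogeneous:
  assumes "y \<in> G n" and "n * d > 0" and "m \<in> ad_orbit br (H \<union> range e) y"
  shows "\<exists>n'. n' * d > 0 \<and> m \<in> G n'"
  using assms(3)
proof (induct rule: ad_orbit.induct)
  case ad_orbit_base
  then show ?case using assms(1,2) by blast
next
  case (ad_orbit_step g v)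
  then obtain n' where v: "v \<in> G n'" and n': "n' * d > 0" by blast
  consider "g \<in> G 0" | "g \<in> G d" using ad_orbit_step(1) H_deg_0 e_deg by blast
  then show ?case
  proof cases
    case 1
    then show ?thesis using G_bracket[OF 1 v] n' by auto
  next
    case 2
    have "(d + n') * d > 0" using d_unit n' by (simp add: distrib_right)
    then show ?thesis using G_bracket[OF 2 v] by blast
  qed
qed

lemma eq_0_if_bracket_f_eq_0:
  assumes y: "y \<in> G n" and pos: "n * d > 0" and killed: "\<And>k. br (f k) y = 0"
  shows "y = 0"
proof -
  define M where "M = ad_orbit br (H \<union> range e) y"
  have raise_M: "br g v \<in> span M" if "g \<in> H \<union> range e" "v \<in> span M" for g v
    using that(2) by (rule bracket_span_closed)
      (use that(1) in \<open>auto simp: M_def intro: span_base ad_orbit_step\<close>)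
  have lower_M: "br (f k) m \<in> span M" if "m \<in> M" for k m
    using that[unfolded M_def]
  proof (induct rule: ad_orbit.induct)
    case ad_orbit_base
    show ?case using killed span_zero by simp
  next
    case (ad_orbit_step g v)
    have "br (br (f k) g) v \<in> span M"
    proof (cases "g \<in> H")
      case True
      then show ?thesis
        using ad_orbit_step(3) by (simp add: bracket_f_H bracket_scale_left span_scale)
    next
      case False
      then obtain j where "g = e j" using ad_orbit_step(1) by blast
      moreover have "br (hh j) v \<in> span M"
        unfolding M_def
        by (intro span_base ad_orbit.ad_orbit_step) (simp_all add: hh_in_H ad_orbit_step(2))
      ultimately show ?thesis
        by (auto simp: bracket_f_e bracket_minus_left span_zero intro: span_neg)
    qed
    moreover have "br g (br (f k) v) \<in> span M"
      using raise_M ad_orbit_step(1,3) by blast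
    ultimately show ?case
      by (simp add: bracket_derivation[of "f k" g v] span_add)
  qed
  have ideal: "lie_ideal sc br (span M)"
    by (rule lie_idealI_generators[OF generated subspace_span])
      (auto intro: raise_M bracket_span_closed lower_M)
  have decomp: "\<exists>c. homog_decomp G x c \<and> (\<forall>n. c n \<in> span M) \<and>
      {n. c n \<noteq> 0} \<subseteq> {n. n * d > 0}"
    if "x \<in> span M" for x
  proof -
    have "\<exists>n\<in>{n. n * d > 0}. m \<in> G n" if "m \<in> M" for m
      using ad_orbit_homogeneous[OF y pos] that unfolding M_def by blast
    then show ?thesis
      using span_homog_decomp[where G = G, OF G_subspace _ that] by metis
  qed
  have "graded_ideal sc br G (span M)"
    using graded_idealI[OF grading ideal] decomp by blast
  moreover have "span M \<inter> H = {0}"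
  proof (intro equalityI subsetI)
    fix x
    assume x: "x \<in> span M \<inter> H"
    then obtain c where c: "homog_decomp G x c" and supp: "{n. c n \<noteq> 0} \<subseteq> {n. n * d > 0}"
      using decomp by blast
    have "homog_decomp G x (\<lambda>m. if m = 0 then x else 0)"
      using x H_deg_0 subspace_0[OF G_subspace] by (intro homog_decomp_single) auto
    then have "c 0 = x" using homog_decomp_unique[OF c] by simp
    then show "x \<in> {0}" using supp by auto
  qed (simp add: span_zero subspace_0[OF H_subspace])
  ultimately have "span M = {0}" by (rule no_graded_ideal)
  then show "y = 0" using span_base[of y M] by (simp add: M_def ad_orbit_base)
qed

end

locale contragredient_char = contragredient_alg sc br H hh xi e f G d
  for sc :: "'k::field \<Rightarrow> 'L::ab_group_add \<Rightarrow> 'L" and br H hh xi e f G d +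
  fixes p :: nat
  assumes prime_p: "prime p" and char_p: "CHAR('k) = p"
    and diag_0_or_2: "xi j (hh j) = 0 \<or> xi j (hh j) = 2"
begin

lemma p_eq_Suc_Suc: "p = Suc (Suc (p - 2))"
  using prime_ge_2_nat[OF prime_p] by simp

lemma diag_eq_0_if_char_2: "p = 2 \<Longrightarrow> xi j (hh j) = 0"
  using diag_0_or_2[of j] char_p of_nat_eq_0_iff_char_dvd[of 2, where 'a = 'k] by auto

lemma of_nat_choose_2_diag: "of_nat (p choose 2) * xi i (hh i) = 0"
proof (cases "p = 2")
  case True
  then show ?thesis using diag_eq_0_if_char_2 by simp
next
  case False
  then have "p dvd p choose 2"
    using prime_ge_2_nat[OF prime_p] prime_p by (intro dvd_choose_prime) auto
  then show ?thesis using char_p by (simp add: of_nat_eq_0_iff_char_dvd)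
qed

lemma ad_e_pow_H: "h \<in> H \<Longrightarrow> (br (e i) ^^ Suc (Suc m)) h = 0"
  by (simp only: ad_pow_Suc_right bracket_e_H bracket_minus_right bracket_scale_right)
    simp

lemma ad_e_pow_p_H: "h \<in> H \<Longrightarrow> (br (e i) ^^ p) h = 0"
  by (subst p_eq_Suc_Suc) (rule ad_e_pow_H)

lemma ad_e_pow_p_e_self: "(br (e i) ^^ p) (e i) = 0"
  by (subst p_eq_Suc_Suc) (simp only: ad_pow_Suc_right bracket_self ad_pow_zero)

lemma ad_e_pow_p_f: "(br (e i) ^^ p) (f k) = 0"
proof (cases "k = i")
  case False
  then have "br (e i) (f k) = 0" by (simp add: bracket_e_f)
  then show ?thesis
    by (subst p_eq_Suc_Suc) (simp only: ad_pow_Suc_right ad_pow_zero)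
next
  case True
  have square: "(br (e i) ^^ 2) (f i) = - sc (xi i (hh i)) (e i)"
    by (simp add: numeral_2_eq_2 bracket_e_f bracket_e_H hh_in_H)
  show ?thesis
  proof (cases "p = 2")
    case True
    then show ?thesis using square diag_eq_0_if_char_2 \<open>k = i\<close> by simp
  next
    case False
    then have p3: "p = Suc (Suc (Suc (p - 3)))" using prime_ge_2_nat[OF prime_p] by simp
    have "(br (e i) ^^ p) (f k) = (br (e i) ^^ Suc (Suc (p - 3))) (br (e i) (f i))"
      using \<open>k = i\<close> by (subst p3) (simp only: ad_pow_Suc_right)
    also have "br (e i) (f i) = hh i" by (simp add: bracket_e_f)
    finally show ?thesis using ad_e_pow_H[OF hh_in_H] by simp
  qed
qed

lemma ad_e_pow_deg: "v \<in> G n \<Longrightarrow> (br (e i) ^^ r) v \<in> G (n + int r * d)"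
proof (induct r)
  case 0
  then show ?case by simp
next
  case (Suc r)
  then have "br (e i) ((br (e i) ^^ r) v) \<in> G (d + (n + int r * d))"
    using G_bracket e_deg by blast
  then show ?case by (simp add: algebra_simps)
qed

lemma bracket_H_ad_e_pow:
  fixes i j
  assumes "h \<in> H"
  defines "z r \<equiv> (br (e i) ^^ r) (e j)"
  shows "br h (z r) = sc (of_nat r * xi i h + xi j h) (z r)"
proof (induct r)
  case 0
  show ?case using bracket_H_e[OF assms(1)] by (simp add: z_def)
next
  case (Suc r)
  have z_Suc: "br (e i) (z m) = z (Suc m)" for m by (simp add: z_def)
  have "br h (z (Suc r)) = br (br h (e i)) (z r) + br (e i) (br h (z r))"
    unfolding z_def funpow.simps comp_apply by (rule bracket_derivation)
  also have "\<dots> = sc (xi i h + (of_nat r * xi i h + xi j h)) (z (Suc r))"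
    by (simp add: Suc bracket_H_e[OF assms(1)] bracket_scale_left bracket_scale_right
        bracket_add_right scale_left_distrib z_Suc)
  finally show ?case by (simp add: algebra_simps)
qed

lemma bracket_f_ad_e_pow:
  fixes i j
  assumes "j \<noteq> i"
  defines "z r \<equiv> (br (e i) ^^ r) (e j)"
  shows "br (f i) (z (Suc r)) =
    - sc (of_nat (Suc r choose 2) * xi i (hh i) + of_nat (Suc r) * xi j (hh i)) (z r)"
proof (induct r)
  case 0
  have "br (f i) (br (e i) (e j)) = br (br (f i) (e i)) (e j) + br (e i) (br (f i) (e j))"
    by (rule bracket_derivation)
  then show ?case
    using assms(1)
    by (simp add: z_def bracket_f_e bracket_minus_left bracket_H_e hh_in_H binomial_eq_0)
next
  case (Suc r)
  have z_Suc: "br (e i) (z m) = z (Suc m)" for m by (simp add: z_def)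
  have "br (f i) (z (Suc (Suc r)))
      = br (br (f i) (e i)) (z (Suc r)) + br (e i) (br (f i) (z (Suc r)))"
    unfolding z_def funpow.simps comp_apply by (rule bracket_derivation)
  also have "\<dots> = - sc (of_nat (Suc r) * xi i (hh i) + xi j (hh i)) (z (Suc r))
      - sc (of_nat (Suc r choose 2) * xi i (hh i) + of_nat (Suc r) * xi j (hh i)) (z (Suc r))"
    using bracket_H_ad_e_pow[where h = "hh i" and i = i and j = j and r = "Suc r", folded z_def]
    by (simp add: Suc hh_in_H bracket_f_e bracket_minus_left bracket_minus_right
        bracket_scale_right z_Suc)
  also have "\<dots> = - sc (of_nat (Suc (Suc r) choose 2) * xi i (hh i)
      + of_nat (Suc (Suc r)) * xi j (hh i)) (z (Suc r))"
  proof -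
    have "(of_nat (Suc (Suc r) choose 2) :: 'k) = of_nat (Suc r choose 2) + of_nat (Suc r)"
      by (simp add: numeral_2_eq_2)
    then have "(of_nat (Suc r) * xi i (hh i) + xi j (hh i))
        + (of_nat (Suc r choose 2) * xi i (hh i) + of_nat (Suc r) * xi j (hh i))
      = of_nat (Suc (Suc r) choose 2) * xi i (hh i) + of_nat (Suc (Suc r)) * xi j (hh i)"
      by (simp add: algebra_simps)
    then show ?thesis by (metis scale_left_distrib minus_add_distrib diff_conv_add_uminus)
  qed
  finally show ?case .
qed

lemma bracket_f_ad_e_pow_commute:
  assumes "k \<noteq> i"
  shows "br (f k) ((br (e i) ^^ r) v) = (br (e i) ^^ r) (br (f k) v)"
proof (induct r)
  case (Suc r)
  have "br (f k) ((br (e i) ^^ Suc r) v)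
      = br (br (f k) (e i)) ((br (e i) ^^ r) v) + br (e i) (br (f k) ((br (e i) ^^ r) v))"
    unfolding funpow.simps comp_apply by (rule bracket_derivation)
  then show ?case using assms Suc by (simp add: bracket_f_e)
qed simp

lemma ad_e_pow_p_e:
  assumes "j \<noteq> i"
  shows "(br (e i) ^^ p) (e j) = 0"
proof (rule eq_0_if_bracket_f_eq_0)
  show "(br (e i) ^^ p) (e j) \<in> G (d + int p * d)"
    using ad_e_pow_deg e_deg by blast
  show "(d + int p * d) * d > 0"
    using d_unit by (simp add: distrib_right mult.assoc)
  show "br (f k) ((br (e i) ^^ p) (e j)) = 0" for k
  proof (cases "k = i")
    case True
    have "p = Suc (p - 1)" using p_eq_Suc_Suc by simp
    then have "br (f i) ((br (e i) ^^ p) (e j)) = - sc (of_nat (p choose 2) * xi i (hh i)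
        + of_nat p * xi j (hh i)) ((br (e i) ^^ (p - 1)) (e j))"
      using bracket_f_ad_e_pow[OF assms, of "p - 1"] by metis
    then show ?thesis
      using True of_nat_choose_2_diag char_p by (simp add: of_nat_eq_0_iff_char_dvd)
  next
    case False
    have "- hh j \<in> H" using subspace_neg[OF H_subspace hh_in_H] .
    then show ?thesis
      using False ad_e_pow_p_H by (auto simp: bracket_f_ad_e_pow_commute bracket_f_e)
  qed
qed

lemma ad_e_pow_p_eq_0: "(br (e i) ^^ p) x = 0"
proof (rule derivation_eq_0_on_lie_generated[where D = "br (e i) ^^ p"])
  show "(br (e i) ^^ p) (br u v) = br ((br (e i) ^^ p) u) v + br u ((br (e i) ^^ p) v)" for u v
    by (rule ad_pow_prime_derivation[OF prime_p char_p])
  show "(br (e i) ^^ p) y = 0" if "y \<in> H \<union> range e \<union> range f" for y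
    using that ad_e_pow_p_H ad_e_pow_p_e ad_e_pow_p_e_self ad_e_pow_p_f by (metis UnE rangeE)
  show "x \<in> lie_generated sc br (H \<union> range e \<union> range f)"
    using generated by simp
qed (simp_all add: ad_pow_add ad_pow_scale)

end

lemma contragredient_imp_contragredient_char:
  fixes sc :: "'k::field \<Rightarrow> 'L::ab_group_add \<Rightarrow> 'L" and A :: "'n::finite \<Rightarrow> 'n \<Rightarrow> 'k"
  assumes "contragredient sc br A H hh xi e f" and "prime p" and "CHAR('k) = p"
    and "\<forall>j. A j j = 0 \<or> A j j = 2"
  obtains G where "contragredient_char sc br H hh xi e f G 1 p"
    and "contragredient_char sc br H (\<lambda>j. - hh j) (\<lambda>k x. - xi k x) f e G (-1) p"
proof -
  note C = assms(1)[unfolded contragredient_def]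
  interpret lie_alg sc br using C by (simp add: lie_alg_def)
  have "\<exists>G. Z_grading sc br G \<and> H \<subseteq> G 0 \<and> (\<forall>j. e j \<in> G 1 \<and> f j \<in> G (-1)) \<and>
      (\<forall>I. graded_ideal sc br G I \<and> I \<inter> H = {0} \<longrightarrow> I = {0})"
    using C by (elim conjE) assumption
  then obtain G where G: "Z_grading sc br G" "H \<subseteq> G 0" "\<forall>j. e j \<in> G 1 \<and> f j \<in> G (-1)"
    "\<forall>I. graded_ideal sc br G I \<and> I \<inter> H = {0} \<longrightarrow> I = {0}"
    by blast
  have diag: "xi j (hh j) = 0 \<or> xi j (hh j) = 2" for j
    using C assms(4) by simp
  have "contragredient_char sc br H hh xi e f G 1 p"
    by unfold_locales (use C G diag assms(2,3) in auto)
  moreover have "contragredient_char sc br H (\<lambda>j. - hh j) (\<lambda>k x. - xi k x) f e G (-1) p"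
  proof unfold_locales
    show "- hh j \<in> H" for j using C subspace_neg[of H "hh j"] by blast
    show "br (f j) (e k) = (if j = k then - hh j else 0)" for j k
      using C bracket_antisym[of "f j" "e k"] by simp
    show "lie_generated sc br (H \<union> range f \<union> range e) = UNIV"
      using C by (simp add: Un_ac)
    have "xi j (- hh j) = - xi j (hh j)" for j
    proof -
      have "xi j (sc (-1) (hh j)) = -1 * xi j (hh j)" using C by blast
      then show ?thesis by simp
    qed
    then show "- xi j (- hh j) = 0 \<or> - xi j (- hh j) = 2" for j
      using diag by simp
  qed (use C G assms(2,3) in auto)
  ultimately show ?thesis using that by blast
qed

theorem lemma4p2:
  fixes sc :: "'k::field \<Rightarrow> 'L::ab_group_add \<Rightarrow> 'L"
    and br :: "'L \<Rightarrow> 'L \<Rightarrow> 'L"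
    and A :: "'n::finite \<Rightarrow> 'n \<Rightarrow> 'k"
    and H :: "'L set" and hh :: "'n \<Rightarrow> 'L" and xi :: "'n \<Rightarrow> 'L \<Rightarrow> 'k"
    and e f :: "'n \<Rightarrow> 'L" and p :: nat
  assumes "prime p" and "CHAR('k) = p" and "alg_closed_field TYPE('k)"
    and "\<forall>j. A j j = 0 \<or> A j j = 2"
    and "\<forall>j k. j \<noteq> k \<longrightarrow> (A j k = 0 \<longleftrightarrow> A k j = 0)"
    and "contragredient sc br A H hh xi e f"
    and "\<exists>S. finite S \<and> module.span sc S = UNIV"
  shows "\<forall>i x. (br (e i) ^^ p) x = 0 \<and> (br (f i) ^^ p) x = 0"
proof -
  obtain G where e_side: "contragredient_char sc br H hh xi e f G 1 p"
    and f_side: "contragredient_char sc br H (\<lambda>j. - hh j) (\<lambda>k x. - xi k x) f e G (-1) p"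
    using contragredient_imp_contragredient_char assms(1,2,4,6) by blast
  show ?thesis
    using contragredient_char.ad_e_pow_p_eq_0[OF e_side]
      contragredient_char.ad_e_pow_p_eq_0[OF f_side] by blast
qed

end
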